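(* Let $\{a_n\}_{n\ge 1}$ be a sequence of positive real numbers and let $\lambda>0$. Define \[ m_1=\liminf_{n\to\infty}\ln(\lambda n)\left(\tfrac12-\tfrac{a_{2n}}{a_n}\right),\quad m_2=\liminf_{n\to\infty}\ln(\lambda n)\left(\tfrac12-\tfrac{a_{2n+1}}{a_n}\right), \] \[ M_1=\limsup_{n\to\infty}\ln(\lambda n)\left(\tfrac12-\tfrac{a_{2n}}{a_n}\right),\quad M_2=\limsup_{n\to\infty}\ln(\lambda n)\left(\tfrac12-\tfrac{a_{2n+1}}{a_n}\right), \] and set $m=\min\{m_1,m_2\}$, $M=\max\{M_1,M_2\}$. Then: (i) if $m>\frac{\ln 2}{2}$, the series $\sum_{n=1}^\infty a_n$ converges; (ii) if $M<\frac{\ln 2}{2}$, the series $\sum_{n=1}^\infty a_n$ diverges.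
   Context: Here $\ln$ denotes the natural logarithm; liminf and limsup are taken in the extended reals. *)

theory Defs
  imports "HOL-Analysis.Analysis"
begin

end

theory Submission
  imports Defs "HOL-Real_Asymp.Real_Asymp"
begin

(* The dyadic block sums T k = a (2^k) + ... + a (2^(k+1) - 1) converge together with the series,
   and T (k+1) is the sum of a (2n) + a (2n+1) over the n of block k. On block k, ln (l n) lies
   between ln (l 2^k) and ln (l 2^(k+1)), both k ln 2 + O(1). So for c strictly between ln 2 / 2
   and m (resp. between M and ln 2 / 2) the hypothesis bounds T (k+1) / T k above (resp. below)
   by 1 - 2c / (\<alpha> + k ln 2), and k (T k / T (k+1) - 1) has liminf at least (resp. limsup at
   most) 2c / ln 2: Raabe's test for the block sums has its threshold exactly at c = ln 2 / 2. *)

definition dyadic_block :: "(nat \<Rightarrow> 'a::comm_monoid_add) \<Rightarrow> nat \<Rightarrow> 'a" where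
  "dyadic_block a k = (\<Sum>n\<in>{2^k..<2^Suc k}. a n)"

lemma sum_atLeastLessThan_double:
  fixes f :: "nat \<Rightarrow> 'a::comm_monoid_add"
  assumes "m \<le> M"
  shows "(\<Sum>n\<in>{2*m..<2*M}. f n) = (\<Sum>n\<in>{m..<M}. f (2*n) + f (2*n+1))"
  using assms
proof (induction M rule: dec_induct)
  case (step M)
  have "{2*m..<2*Suc M} = insert (2*M+1) (insert (2*M) {2*m..<2*M})"
    using step.hyps by auto
  then show ?case
    using step by (simp add: atLeastLessThanSuc add_ac)
qed simp

lemma dyadic_block_Suc:
  "dyadic_block a (Suc k) = (\<Sum>n\<in>{2^k..<2^Suc k}. a (2*n) + a (2*n+1))"
proof -
  have "dyadic_block a (Suc k) = (\<Sum>n\<in>{2*2^k..<2*2^Suc k}. a n)"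
    unfolding dyadic_block_def by simp
  also have "\<dots> = (\<Sum>n\<in>{2^k..<2^Suc k}. a (2*n) + a (2*n+1))"
    by (rule sum_atLeastLessThan_double) simp
  finally show ?thesis .
qed

lemma sum_dyadic_blocks: "(\<Sum>n\<in>{1..<2^N}. a n) = (\<Sum>k<N. dyadic_block a k)"
proof (induction N)
  case (Suc N)
  have "(\<Sum>n\<in>{1..<2^Suc N}. a n) = (\<Sum>n\<in>{1..<2^N}. a n) + (\<Sum>n\<in>{2^N..<2^Suc N}. a n)"
    by (rule sum.atLeastLessThan_concat[symmetric]) auto
  with Suc show ?case
    by (simp add: dyadic_block_def)
qed simp

lemma summable_iff_summable_dyadic_block:
  fixes a :: "nat \<Rightarrow> real"
  assumes nonneg: "\<And>n. n \<ge> 1 \<Longrightarrow> 0 \<le> a n"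
  shows "summable (\<lambda>n. a (Suc n)) \<longleftrightarrow> summable (dyadic_block a)"
proof -
  have shift: "(\<Sum>i<m. a (Suc i)) = (\<Sum>n\<in>{1..<Suc m}. a n)" for m
    by (simp only: One_nat_def sum.shift_bounds_Suc_ivl lessThan_atLeast0)
  have mono: "(\<Sum>n\<in>{1..<m}. a n) \<le> (\<Sum>n\<in>{1..<m'}. a n)" if "m \<le> m'" for m m'
    using that nonneg by (intro sum_mono2) auto
  have block_nonneg: "0 \<le> dyadic_block a k" for k
    unfolding dyadic_block_def using nonneg by (intro sum_nonneg) (simp add: Suc_le_eq)
  show ?thesis
  proof
    assume summable: "summable (\<lambda>n. a (Suc n))"
    show "summable (dyadic_block a)"
    proof (rule summableI_nonneg_bounded[OF block_nonneg])
      fix N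
      have "(\<Sum>k<N. dyadic_block a k) \<le> (\<Sum>n\<in>{1..<Suc (2^N)}. a n)"
        unfolding sum_dyadic_blocks[symmetric] by (rule mono) simp
      also have "\<dots> \<le> (\<Sum>n. a (Suc n))"
        unfolding shift[symmetric] using summable nonneg by (intro sum_le_suminf) auto
      finally show "(\<Sum>k<N. dyadic_block a k) \<le> (\<Sum>n. a (Suc n))" .
    qed
  next
    assume summable: "summable (dyadic_block a)"
    show "summable (\<lambda>n. a (Suc n))"
    proof (rule summableI_nonneg_bounded)
      fix N
      have "Suc N < 2^Suc N"
        by (rule less_exp)
      then have "(\<Sum>i<N. a (Suc i)) \<le> (\<Sum>n\<in>{1..<2^Suc N}. a n)"
        unfolding shift by (intro mono) simp
      also have "\<dots> \<le> suminf (dyadic_block a)"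
        unfolding sum_dyadic_blocks using summable block_nonneg by (intro sum_le_suminf) auto
      finally show "(\<Sum>i<N. a (Suc i)) \<le> suminf (dyadic_block a)" .
    qed (simp add: nonneg)
  qed
qed

lemma dyadic_block_pos:
  fixes a :: "nat \<Rightarrow> real"
  assumes "\<And>n. n \<ge> 1 \<Longrightarrow> 0 < a n"
  shows "0 < dyadic_block a k"
  unfolding dyadic_block_def using assms by (intro sum_pos) (auto simp: Suc_le_eq)

lemma dyadic_block_Suc_le:
  fixes a :: "nat \<Rightarrow> real"
  assumes "\<And>n. 2^k \<le> n \<Longrightarrow> n < 2^Suc k \<Longrightarrow> a (2*n) + a (2*n+1) \<le> r * a n"
  shows "dyadic_block a (Suc k) \<le> r * dyadic_block a k"
  unfolding dyadic_block_Suc unfolding dyadic_block_def sum_distrib_left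
  using assms by (intro sum_mono) auto

lemma dyadic_block_Suc_ge:
  fixes a :: "nat \<Rightarrow> real"
  assumes "\<And>n. 2^k \<le> n \<Longrightarrow> n < 2^Suc k \<Longrightarrow> r * a n \<le> a (2*n) + a (2*n+1)"
  shows "r * dyadic_block a k \<le> dyadic_block a (Suc k)"
  unfolding dyadic_block_Suc unfolding dyadic_block_def sum_distrib_left
  using assms by (intro sum_mono) auto

lemma eventually_all_ge_power2:
  assumes "eventually P sequentially"
  shows "eventually (\<lambda>k. \<forall>n\<ge>2^k. P n) sequentially"
proof -
  obtain N where N: "\<And>n. n \<ge> N \<Longrightarrow> P n"
    using assms unfolding eventually_sequentially by blast
  have "\<forall>n\<ge>2^k. P n" if "k \<ge> N" for k :: nat
  proof (intro allI impI N)
    fix n :: nat assume "2^k \<le> n"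
    with that less_exp[of k] show "N \<le> n" by linarith
  qed
  then show ?thesis
    unfolding eventually_sequentially by blast
qed

lemma le_half_minus_div_mult:
  fixes x y c L L' :: real
  assumes "0 < c" "0 < L" "L \<le> L'" "0 < y" "c < L * (1/2 - x/y)"
  shows "x \<le> (1/2 - c/L') * y"
proof -
  have "c/L' \<le> c/L"
    using assms by (intro divide_left_mono) auto
  moreover have "c/L < 1/2 - x/y"
    using assms by (simp add: pos_divide_less_eq mult.commute)
  ultimately have "x/y \<le> 1/2 - c/L'"
    by linarith
  then show ?thesis
    using assms by (simp add: pos_divide_le_eq)
qed

lemma half_minus_div_mult_le:
  fixes x y c L L' :: real
  assumes "0 \<le> c" "0 < L'" "L' \<le> L" "0 < y" "L * (1/2 - x/y) < c"
  shows "(1/2 - c/L') * y \<le> x"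
proof -
  have "c/L \<le> c/L'"
    using assms by (intro divide_left_mono) auto
  moreover have "1/2 - x/y < c/L"
    using assms by (simp add: pos_less_divide_eq mult.commute)
  ultimately have "1/2 - c/L' \<le> x/y"
    by linarith
  then show ?thesis
    using assms by (simp add: pos_le_divide_eq)
qed

lemma ln_mult_power2:
  fixes l :: real
  assumes "0 < l"
  shows "ln (l * 2^k) = ln l + real k * ln 2"
  using assms by (simp add: ln_mult ln_realpow)

lemma dyadic_block_ratio_upper:
  fixes a :: "nat \<Rightarrow> real" and l c :: real
  assumes pos: "\<And>n. n \<ge> 1 \<Longrightarrow> 0 < a n" and l: "0 < l" and c: "0 < c"
    and ev: "eventually (\<lambda>n. c < ln (l * real n) * (1/2 - a (2*n) / a n)
                          \<and> c < ln (l * real n) * (1/2 - a (2*n+1) / a n)) sequentially"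
  shows "eventually (\<lambda>k. dyadic_block a (Suc k)
           \<le> (1 - 2*c / (ln (2*l) + real k * ln 2)) * dyadic_block a k) sequentially"
proof -
  have "eventually (\<lambda>n. 1 < l * real n) sequentially"
    using l by real_asymp
  then have "eventually (\<lambda>k. \<forall>n\<ge>2^k. 1 < l * real n
      \<and> c < ln (l * real n) * (1/2 - a (2*n) / a n)
      \<and> c < ln (l * real n) * (1/2 - a (2*n+1) / a n)) sequentially"
    using ev by (rule eventually_all_ge_power2[OF eventually_conj])
  then show ?thesis
  proof eventually_elim
    case (elim k)
    let ?L = "ln (2*l) + real k * ln 2"
    show ?case
    proof (rule dyadic_block_Suc_le)
      fix n :: nat assume n: "2^k \<le> n" "n < 2^Suc k"
      have "l * real n \<le> l * 2^Suc k"
        using n l by (simp del: power_Suc)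
      then have "ln (l * real n) \<le> ?L"
        using elim n l by (simp add: ln_mult_power2[symmetric] mult.commute mult.left_commute)
      moreover have "0 < ln (l * real n)" "0 < a n"
        using elim n pos by auto
      ultimately have "a (2*n) \<le> (1/2 - c/?L) * a n" "a (2*n+1) \<le> (1/2 - c/?L) * a n"
        using elim n c by (blast intro: le_half_minus_div_mult)+
      moreover have "(1 - 2*c/?L) * a n = (1/2 - c/?L) * a n + (1/2 - c/?L) * a n"
        by (simp add: algebra_simps)
      ultimately show "a (2*n) + a (2*n+1) \<le> (1 - 2*c/?L) * a n"
        by linarith
    qed
  qed
qed

lemma dyadic_block_ratio_lower:
  fixes a :: "nat \<Rightarrow> real" and l c :: real
  assumes pos: "\<And>n. n \<ge> 1 \<Longrightarrow> 0 < a n" and l: "0 < l" and c: "0 \<le> c"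
    and ev: "eventually (\<lambda>n. ln (l * real n) * (1/2 - a (2*n) / a n) < c
                          \<and> ln (l * real n) * (1/2 - a (2*n+1) / a n) < c) sequentially"
  shows "eventually (\<lambda>k. (1 - 2*c / (ln l + real k * ln 2)) * dyadic_block a k
           \<le> dyadic_block a (Suc k)) sequentially"
proof -
  have "eventually (\<lambda>k. 0 < ln l + real k * ln 2) sequentially"
    by real_asymp
  moreover have "eventually (\<lambda>k. \<forall>n\<ge>2^k. 1 \<le> n
      \<and> ln (l * real n) * (1/2 - a (2*n) / a n) < c
      \<and> ln (l * real n) * (1/2 - a (2*n+1) / a n) < c) sequentially"
    using eventually_ge_at_top[of 1] ev by (rule eventually_all_ge_power2[OF eventually_conj])
  ultimately show ?thesis
  proof eventually_elim
    case (elim k)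
    let ?L = "ln l + real k * ln 2"
    show ?case
    proof (rule dyadic_block_Suc_ge)
      fix n :: nat assume n: "2^k \<le> n" "n < 2^Suc k"
      have "?L \<le> ln (l * real n)"
        using n l by (simp add: ln_mult_power2[symmetric])
      moreover have "0 < a n"
        using elim n pos by auto
      ultimately have "(1/2 - c/?L) * a n \<le> a (2*n)" "(1/2 - c/?L) * a n \<le> a (2*n+1)"
        using elim n c by (blast intro: half_minus_div_mult_le)+
      moreover have "(1 - 2*c/?L) * a n = (1/2 - c/?L) * a n + (1/2 - c/?L) * a n"
        by (simp add: algebra_simps)
      ultimately show "(1 - 2*c/?L) * a n \<le> a (2*n) + a (2*n+1)"
        by linarith
    qed
  qed
qed

lemma raabes_test_convergence_ratio_bound:
  fixes T :: "nat \<Rightarrow> real" and \<alpha> \<gamma> h :: real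
  assumes pos: "eventually (\<lambda>k. 0 < T k) sequentially" and h: "0 < h" "h < \<gamma>"
    and ratio: "eventually (\<lambda>k. T (Suc k) \<le> (1 - \<gamma> / (\<alpha> + real k * h)) * T k) sequentially"
  shows "summable T"
proof (rule raabes_test_convergence[OF pos])
  define g where "g k = real k * \<gamma> / (\<alpha> + real k * h - \<gamma>)" for k
  have "eventually (\<lambda>k. \<gamma> < \<alpha> + real k * h) sequentially"
    using h by real_asymp
  moreover have "eventually (\<lambda>k. 0 < T (Suc k)) sequentially"
    using pos by (rule eventually_sequentially_Suc[THEN iffD2])
  ultimately have "eventually (\<lambda>k. ereal (g k) \<le> ereal (real k * (T k / T (Suc k) - 1))) sequentially"
    using pos ratio
  proof eventually_elim
    case (elim k)
    let ?L = "\<alpha> + real k * h"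
    have "T (Suc k) * ?L \<le> (?L - \<gamma>) * T k"
      using elim h by (simp add: field_simps)
    then have "\<gamma> / (?L - \<gamma>) \<le> T k / T (Suc k) - 1"
      using elim by (simp add: field_simps)
    then show ?case
      unfolding g_def by (simp add: mult_left_mono flip: times_divide_eq_right)
  qed
  then have "liminf (\<lambda>k. ereal (g k)) \<le> liminf (\<lambda>k. ereal (real k * (T k / T (Suc k) - 1)))"
    by (rule Liminf_mono)
  moreover have "(g \<longlongrightarrow> \<gamma> / h) sequentially"
    unfolding g_def using h by (real_asymp simp: divide_inverse)
  then have "liminf (\<lambda>k. ereal (g k)) = ereal (\<gamma> / h)"
    by (intro lim_imp_Liminf) simp_all
  moreover have "1 < ereal (\<gamma> / h)"
    using h by simp
  ultimately show "1 < liminf (\<lambda>k. ereal (real k * (T k / T (Suc k) - 1)))"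
    by (metis order.strict_trans2)
qed

lemma raabes_test_divergence_ratio_bound:
  fixes T :: "nat \<Rightarrow> real" and \<alpha> \<gamma> h :: real
  assumes pos: "eventually (\<lambda>k. 0 < T k) sequentially" and h: "0 < h" "\<gamma> < h"
    and ratio: "eventually (\<lambda>k. (1 - \<gamma> / (\<alpha> + real k * h)) * T k \<le> T (Suc k)) sequentially"
  shows "\<not> summable T"
proof (rule raabes_test_divergence[OF pos])
  define g where "g k = real k * \<gamma> / (\<alpha> + real k * h - \<gamma>)" for k
  have "eventually (\<lambda>k. \<gamma> < \<alpha> + real k * h) sequentially"
       "eventually (\<lambda>k. 0 < \<alpha> + real k * h) sequentially"
    using h by real_asymp+
  moreover have "eventually (\<lambda>k. 0 < T (Suc k)) sequentially"
    using pos by (rule eventually_sequentially_Suc[THEN iffD2])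
  ultimately have "eventually (\<lambda>k. ereal (real k * (T k / T (Suc k) - 1)) \<le> ereal (g k)) sequentially"
    using pos ratio
  proof eventually_elim
    case (elim k)
    let ?L = "\<alpha> + real k * h"
    have "(?L - \<gamma>) * T k \<le> T (Suc k) * ?L"
      using elim by (simp add: field_simps)
    then have "T k / T (Suc k) - 1 \<le> \<gamma> / (?L - \<gamma>)"
      using elim by (simp add: field_simps)
    then show ?case
      unfolding g_def by (simp add: mult_left_mono flip: times_divide_eq_right)
  qed
  then have "limsup (\<lambda>k. ereal (real k * (T k / T (Suc k) - 1))) \<le> limsup (\<lambda>k. ereal (g k))"
    by (rule Limsup_mono)
  moreover have "(g \<longlongrightarrow> \<gamma> / h) sequentially"
    unfolding g_def using h by (real_asymp simp: divide_inverse)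
  then have "limsup (\<lambda>k. ereal (g k)) = ereal (\<gamma> / h)"
    by (intro lim_imp_Limsup) simp_all
  moreover have "ereal (\<gamma> / h) < 1"
    using h by simp
  ultimately show "limsup (\<lambda>k. ereal (real k * (T k / T (Suc k) - 1))) < 1"
    by (metis order.strict_trans1)
qed

lemma summable_if_eventually_gt_half_ln2:
  fixes a :: "nat \<Rightarrow> real" and l c :: real
  assumes pos: "\<And>n. n \<ge> 1 \<Longrightarrow> 0 < a n" and l: "0 < l" and c: "ln 2 / 2 < c"
    and ev: "eventually (\<lambda>n. c < ln (l * real n) * (1/2 - a (2*n) / a n)
                          \<and> c < ln (l * real n) * (1/2 - a (2*n+1) / a n)) sequentially"
  shows "summable (\<lambda>n. a (Suc n))"
proof -
  have "0 < c"
    using c ln_gt_zero[of 2] by linarith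
  then have "eventually (\<lambda>k. dyadic_block a (Suc k)
      \<le> (1 - 2*c / (ln (2*l) + real k * ln 2)) * dyadic_block a k) sequentially"
    using ev dyadic_block_ratio_upper[OF _ l] pos by blast
  moreover have "eventually (\<lambda>k. 0 < dyadic_block a k) sequentially"
    using pos by (intro always_eventually allI dyadic_block_pos)
  ultimately have "summable (dyadic_block a)"
    using c by (intro raabes_test_convergence_ratio_bound[where \<gamma> = "2*c"]) auto
  then show ?thesis
    using pos by (simp add: summable_iff_summable_dyadic_block less_imp_le)
qed

lemma not_summable_if_eventually_lt_half_ln2:
  fixes a :: "nat \<Rightarrow> real" and l c :: real
  assumes pos: "\<And>n. n \<ge> 1 \<Longrightarrow> 0 < a n" and l: "0 < l" and c: "0 \<le> c" "c < ln 2 / 2"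
    and ev: "eventually (\<lambda>n. ln (l * real n) * (1/2 - a (2*n) / a n) < c
                          \<and> ln (l * real n) * (1/2 - a (2*n+1) / a n) < c) sequentially"
  shows "\<not> summable (\<lambda>n. a (Suc n))"
proof -
  have "eventually (\<lambda>k. (1 - 2*c / (ln l + real k * ln 2)) * dyadic_block a k
      \<le> dyadic_block a (Suc k)) sequentially"
    using ev dyadic_block_ratio_lower[OF _ l c(1)] pos by blast
  moreover have "eventually (\<lambda>k. 0 < dyadic_block a k) sequentially"
    using pos by (intro always_eventually allI dyadic_block_pos)
  ultimately have "\<not> summable (dyadic_block a)"
    using c by (intro raabes_test_divergence_ratio_bound[where \<gamma> = "2*c"]) auto
  then show ?thesis
    using pos by (simp add: summable_iff_summable_dyadic_block less_imp_le)
qed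

theorem theorem2p1:
  fixes a :: "nat \<Rightarrow> real" and l :: real
    and m1 m2 M1 M2 m M :: ereal
  assumes pos: "\<And>n. n \<ge> 1 \<Longrightarrow> a n > 0"
    and lam: "l > 0"
    and m1_def: "m1 = liminf (\<lambda>n. ereal (ln (l * real n) * (1/2 - a (2*n) / a n)))"
    and m2_def: "m2 = liminf (\<lambda>n. ereal (ln (l * real n) * (1/2 - a (2*n+1) / a n)))"
    and M1_def: "M1 = limsup (\<lambda>n. ereal (ln (l * real n) * (1/2 - a (2*n) / a n)))"
    and M2_def: "M2 = limsup (\<lambda>n. ereal (ln (l * real n) * (1/2 - a (2*n+1) / a n)))"
    and m_def: "m = min m1 m2"
    and M_def: "M = max M1 M2"
  shows "(m > ereal (ln 2 / 2) \<longrightarrow> summable (\<lambda>n. a (Suc n)))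
       \<and> (M < ereal (ln 2 / 2) \<longrightarrow> \<not> summable (\<lambda>n. a (Suc n)))"
proof (intro conjI impI)
  assume "ereal (ln 2 / 2) < m"
  then obtain c where c: "ln 2 / 2 < c" "ereal c < m1" "ereal c < m2"
    unfolding m_def by (metis ereal_dense2 less_ereal.simps(1) min_less_iff_conj)
  have "eventually (\<lambda>n. c < ln (l * real n) * (1/2 - a (2*n) / a n)
                     \<and> c < ln (l * real n) * (1/2 - a (2*n+1) / a n)) sequentially"
    using less_LiminfD[OF c(2)[unfolded m1_def]] less_LiminfD[OF c(3)[unfolded m2_def]]
    by eventually_elim simp
  then show "summable (\<lambda>n. a (Suc n))"
    using summable_if_eventually_gt_half_ln2[OF _ lam c(1)] pos by blast
next
  assume "M < ereal (ln 2 / 2)"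
  then have "max M 0 < ereal (ln 2 / 2)"
    by simp
  then obtain c where "max M 0 < ereal c" "ereal c < ereal (ln 2 / 2)"
    using ereal_dense2 by blast
  then have c: "0 \<le> c" "c < ln 2 / 2" "M1 < ereal c" "M2 < ereal c"
    unfolding M_def by simp_all
  have "eventually (\<lambda>n. ln (l * real n) * (1/2 - a (2*n) / a n) < c
                     \<and> ln (l * real n) * (1/2 - a (2*n+1) / a n) < c) sequentially"
    using Limsup_lessD[OF c(3)[unfolded M1_def]] Limsup_lessD[OF c(4)[unfolded M2_def]]
    by eventually_elim simp
  then show "\<not> summable (\<lambda>n. a (Suc n))"
    using not_summable_if_eventually_lt_half_ln2[OF _ lam c(1,2)] pos by blast
qed

end
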